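(* Let $M$ be a finite-horizon MDP and $\mathcal D$ an arbitrary offline dataset of trajectories. For every policy $\pi$, $$p_{out}^{M,\mathcal D}(\pi)\le H\Big(\|\rho_\pi^M(s)-\rho_\pi^{M_{\mathcal D}}(s)\|_1+\|\rho_\pi^M(s,a,r)-\rho_\pi^{M_{\mathcal D}}(s,a,r)\|_1\Big).$$
   Context: $M=(\mathcal S,\mathcal A,\mathcal R,H,P,R)$ is a finite-horizon MDP with finite spaces, fixed initial state $s_0$, state space partitioned into disjoint layers $\mathcal S_h$ by timestep. Visitation distributions: $\rho_\pi(s_0)=1/H$, $\rho_\pi(s)=\sum_{\tilde s\in\mathcal S_{h-1},\tilde a}\rho_\pi(\tilde s)\pi(\tilde a\mid\tilde s)P(s\mid\tilde s,\tilde a)$ for $s\in\mathcal S_h$, $h>0$, and $\rho_\pi(s,a,r)=\rho_\pi(s)\pi(a\mid s)R(r\mid s,a)$; the $\ell_1$ norms are over all states, resp. all triples $(s,a,r)$. $M_{\mathcal D}$ is the dataset-induced MDP with empirical transitions $N(s,a,s')/N(s,a)$ and rewards $N(s,a,r)/N(s,a)$ when $N(s,a)>0$ and $0$ otherwise ($N$ counts occurrences in $\mathcal D$). $p_{out}^{M,\mathcal D}(\pi)=\sum_{\tau_H}p_\pi^M(\tau_H)\,\mathbf 1[\exists t: s_t\notin\mathcal D\text{ or }(s_t,a_t,r_t)\notin\mathcal D]$ is the probability that an $H$-step trajectory $\tau_H=(s_0,a_0,r_0,\dots,s_{H-1},a_{H-1},r_{H-1})$ generated by $\pi$ in $M$ contains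 a state or a state-action-reward triple not appearing in $\mathcal D$. *)

theory Defs
  imports Complex_Main
begin

definition st_of :: "'s \<times> 'a \<times> 'r \<Rightarrow> 's" where "st_of x = fst x"
definition ac_of :: "'s \<times> 'a \<times> 'r \<Rightarrow> 'a" where "ac_of x = fst (snd x)"
definition rw_of :: "'s \<times> 'a \<times> 'r \<Rightarrow> 'r" where "rw_of x = snd (snd x)"

definition traj_prob ::
  "'s \<Rightarrow> nat \<Rightarrow> ('s \<Rightarrow> 'a \<Rightarrow> 's \<Rightarrow> real) \<Rightarrow> ('s \<Rightarrow> 'a \<Rightarrow> 'r \<Rightarrow> real)
    \<Rightarrow> ('s \<Rightarrow> 'a \<Rightarrow> real) \<Rightarrow> ('s \<times> 'a \<times> 'r) list \<Rightarrow> real" where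
  "traj_prob s0 H P R pol \<tau> =
     (if length \<tau> = H \<and> 0 < H \<and> st_of (\<tau> ! 0) = s0 then
        (\<Prod>t<H. pol (st_of (\<tau>!t)) (ac_of (\<tau>!t)) * R (st_of (\<tau>!t)) (ac_of (\<tau>!t)) (rw_of (\<tau>!t)))
        * (\<Prod>t<H - 1. P (st_of (\<tau>!t)) (ac_of (\<tau>!t)) (st_of (\<tau>!Suc t)))
      else 0)"

definition D_triples :: "('s \<times> 'a \<times> 'r) list list \<Rightarrow> ('s \<times> 'a \<times> 'r) set" where
  "D_triples D = (\<Union>\<tau>\<in>set D. set \<tau>)"

definition D_states :: "('s \<times> 'a \<times> 'r) list list \<Rightarrow> 's set" where
  "D_states D = st_of ` D_triples D"

definition p_out ::
  "'s \<Rightarrow> nat \<Rightarrow> ('s \<Rightarrow> 'a \<Rightarrow> 's \<Rightarrow> real) \<Rightarrow> ('s \<Rightarrow> 'a \<Rightarrow> 'r \<Rightarrow> real)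
    \<Rightarrow> ('s \<Rightarrow> 'a \<Rightarrow> real) \<Rightarrow> ('s \<times> 'a \<times> 'r) list list \<Rightarrow> real" where
  "p_out s0 H P R pol D =
     (\<Sum>\<tau>\<in>{\<tau>. length \<tau> = H}. traj_prob s0 H P R pol \<tau> *
        (if \<exists>t<H. st_of (\<tau>!t) \<notin> D_states D \<or> \<tau>!t \<notin> D_triples D then 1 else 0))"

definition N_sa :: "('s \<times> 'a \<times> 'r) list list \<Rightarrow> 's \<Rightarrow> 'a \<Rightarrow> nat" where
  "N_sa D s a = (\<Sum>\<tau>\<leftarrow>D. length (filter (\<lambda>x. st_of x = s \<and> ac_of x = a) \<tau>))"

definition N_sar :: "('s \<times> 'a \<times> 'r) list list \<Rightarrow> 's \<Rightarrow> 'a \<Rightarrow> 'r \<Rightarrow> nat" where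
  "N_sar D s a r = (\<Sum>\<tau>\<leftarrow>D. count_list \<tau> (s, a, r))"

definition N_sas :: "('s \<times> 'a \<times> 'r) list list \<Rightarrow> 's \<Rightarrow> 'a \<Rightarrow> 's \<Rightarrow> nat" where
  "N_sas D s a s' = (\<Sum>\<tau>\<leftarrow>D. card {i. Suc i < length \<tau> \<and> st_of (\<tau>!i) = s \<and>
       ac_of (\<tau>!i) = a \<and> st_of (\<tau>!Suc i) = s'})"

definition P_D :: "('s \<times> 'a \<times> 'r) list list \<Rightarrow> 's \<Rightarrow> 'a \<Rightarrow> 's \<Rightarrow> real" where
  "P_D D s a s' = (if 0 < N_sa D s a then real (N_sas D s a s') / real (N_sa D s a) else 0)"

definition R_D :: "('s \<times> 'a \<times> 'r) list list \<Rightarrow> 's \<Rightarrow> 'a \<Rightarrow> 'r \<Rightarrow> real" where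
  "R_D D s a r = (if 0 < N_sa D s a then real (N_sar D s a r) / real (N_sa D s a) else 0)"

primrec rho_layer ::
  "('s \<Rightarrow> nat) \<Rightarrow> 's \<Rightarrow> nat \<Rightarrow> ('s \<Rightarrow> 'a \<Rightarrow> 's \<Rightarrow> real) \<Rightarrow> ('s \<Rightarrow> 'a \<Rightarrow> real)
     \<Rightarrow> nat \<Rightarrow> 's \<Rightarrow> real" where
  "rho_layer lay s0 H P pol 0 = (\<lambda>s. if s = s0 then 1 / real H else 0)"
| "rho_layer lay s0 H P pol (Suc h) = (\<lambda>s. \<Sum>s'\<in>{x. lay x = h}. \<Sum>a\<in>UNIV.
      rho_layer lay s0 H P pol h s' * pol s' a * P s' a s)"

definition rho_s ::
  "('s \<Rightarrow> nat) \<Rightarrow> 's \<Rightarrow> nat \<Rightarrow> ('s \<Rightarrow> 'a \<Rightarrow> 's \<Rightarrow> real) \<Rightarrow> ('s \<Rightarrow> 'a \<Rightarrow> real) \<Rightarrow> 's \<Rightarrow> real" where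
  "rho_s lay s0 H P pol s = rho_layer lay s0 H P pol (lay s) s"

definition rho_sar ::
  "('s \<Rightarrow> nat) \<Rightarrow> 's \<Rightarrow> nat \<Rightarrow> ('s \<Rightarrow> 'a \<Rightarrow> 's \<Rightarrow> real) \<Rightarrow> ('s \<Rightarrow> 'a \<Rightarrow> 'r \<Rightarrow> real)
     \<Rightarrow> ('s \<Rightarrow> 'a \<Rightarrow> real) \<Rightarrow> 's \<Rightarrow> 'a \<Rightarrow> 'r \<Rightarrow> real" where
  "rho_sar lay s0 H P R pol s a r = rho_s lay s0 H P pol s * pol s a * R s a r"

definition finite_mdp ::
  "('s::finite \<Rightarrow> nat) \<Rightarrow> 's \<Rightarrow> nat \<Rightarrow> ('s \<Rightarrow> 'a::finite \<Rightarrow> 's \<Rightarrow> real)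
     \<Rightarrow> ('s \<Rightarrow> 'a \<Rightarrow> 'r::finite \<Rightarrow> real) \<Rightarrow> bool" where
  "finite_mdp lay s0 H P R \<longleftrightarrow>
     0 < H \<and> lay s0 = 0 \<and> (\<forall>s. lay s < H) \<and>
     (\<forall>s a s'. 0 \<le> P s a s') \<and>
     (\<forall>s a. Suc (lay s) < H \<longrightarrow> (\<Sum>s'\<in>UNIV. P s a s') = 1) \<and>
     (\<forall>s a s'. Suc (lay s) < H \<longrightarrow> P s a s' \<noteq> 0 \<longrightarrow> lay s' = Suc (lay s)) \<and>
     (\<forall>s a r. 0 \<le> R s a r) \<and> (\<forall>s a. (\<Sum>r\<in>UNIV. R s a r) = 1)"

definition is_policy :: "('s::finite \<Rightarrow> 'a::finite \<Rightarrow> real) \<Rightarrow> bool" where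
  "is_policy pol \<longleftrightarrow> (\<forall>s a. 0 \<le> pol s a) \<and> (\<forall>s. (\<Sum>a\<in>UNIV. pol s a) = 1)"

end

theory Submission
  imports Defs
begin

text \<open>A trajectory leaves the dataset only if some step t visits a triple (s,a,r) that does not
  occur in D (an unseen state makes its triple unseen as well). By the union bound, p_out is at
  most the expected number of such visits. Because \<open>\<rho>\<^sub>0(s\<^sub>0) = 1/H\<close>, step t of a
  trajectory of \<pi> equals (s,a,r) with probability \<open>H \<rho>\<^sub>t(s) \<pi>(a|s) R(r|s,a)\<close>, so the expected
  number of visits to unseen triples is \<open>H \<Sum> \<rho>(s,a,r)\<close> over unseen triples. The empirical reward
  kernel vanishes on unseen triples, hence so does the visitation distribution of the
  dataset-induced MDP, and each term is a term of the l1 distance of the two triple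
  visitation distributions.\<close>

lemma sum_lists_length_Suc:
  "(\<Sum>xs | length xs = Suc n. f xs) = (\<Sum>xs | length xs = n. \<Sum>y\<in>UNIV. f (xs @ [y]))"
proof -
  have inj: "inj_on (\<lambda>(xs, y). xs @ [y]) ({xs. length xs = n} \<times> UNIV)"
    by (auto simp: inj_on_def)
  have img: "(\<lambda>(xs, y). xs @ [y]) ` ({xs. length xs = n} \<times> UNIV) = {xs. length xs = Suc n}"
    by (auto simp: image_def length_Suc_conv_rev)
  have "(\<Sum>xs | length xs = n. \<Sum>y\<in>UNIV. f (xs @ [y]))
      = (\<Sum>(xs, y)\<in>{xs. length xs = n} \<times> UNIV. f (xs @ [y]))"
    by (rule sum.cartesian_product)
  also have "\<dots> = sum f ((\<lambda>(xs, y). xs @ [y]) ` ({xs. length xs = n} \<times> UNIV))"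
    unfolding sum.reindex[OF inj] by (simp add: comp_def case_prod_unfold)
  finally show ?thesis
    by (simp only: img)
qed

lemma of_bool_ex_le_count:
  "(of_bool (\<exists>t::nat<n. Q t) :: 'a::linordered_semidom) \<le> (\<Sum>t<n. of_bool (Q t))"
proof (cases "\<exists>t<n. Q t")
  case True
  then obtain t where "t < n" "Q t" by blast
  then have "of_bool (Q t) \<le> (\<Sum>t<n. of_bool (Q t) :: 'a)"
    by (intro member_le_sum) simp_all
  with True \<open>Q t\<close> show ?thesis by simp
qed (simp add: sum_nonneg)

lemma sum_regroup_by_value:
  fixes f :: "'b \<Rightarrow> 'a::comm_semiring_1" and h :: "'b \<Rightarrow> 'c::finite"
  shows "(\<Sum>x\<in>A. f x * g (h x)) = (\<Sum>z\<in>UNIV. (\<Sum>x\<in>A. f x * of_bool (h x = z)) * g z)"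
proof -
  have "f x * g (h x) = (\<Sum>z\<in>UNIV. f x * of_bool (h x = z) * g z)" for x
  proof -
    have "f x * of_bool (h x = z) * g z = (if h x = z then f x * g z else 0)" for z
      by simp
    then show ?thesis by simp
  qed
  then show ?thesis
    by (simp add: sum.swap[of _ A] sum_distrib_right)
qed

lemma sum_UNIV_triples:
  "(\<Sum>x\<in>UNIV. f x) = (\<Sum>s\<in>UNIV. \<Sum>a\<in>UNIV. \<Sum>r\<in>UNIV. f (s, a, r))"
  by (simp add: sum.cartesian_product UNIV_Times_UNIV[symmetric] del: UNIV_Times_UNIV)

lemma R_D_eq_0_if_unseen:
  assumes "(s, a, r) \<notin> D_triples D"
  shows "R_D D s a r = 0"
proof -
  have "N_sar D s a r = 0"
    using assms by (auto simp: D_triples_def N_sar_def count_list_0_iff)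
  then show ?thesis
    by (simp add: R_D_def)
qed

lemma rho_sar_dataset_eq_0_if_unseen:
  "(s, a, r) \<notin> D_triples D \<Longrightarrow> rho_sar lay s0 H P' (R_D D) pol s a r = 0"
  by (simp add: rho_sar_def R_D_eq_0_if_unseen)

definition act_rew_prob ::
  "('s \<Rightarrow> 'a \<Rightarrow> real) \<Rightarrow> ('s \<Rightarrow> 'a \<Rightarrow> 'r \<Rightarrow> real) \<Rightarrow> 's \<times> 'a \<times> 'r \<Rightarrow> real" where
  "act_rew_prob pol R x = pol (st_of x) (ac_of x) * R (st_of x) (ac_of x) (rw_of x)"

lemma traj_prob_singleton:
  "traj_prob s0 (Suc 0) P R pol [x] = of_bool (st_of x = s0) * act_rew_prob pol R x"
  by (simp add: traj_prob_def act_rew_prob_def)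

lemma traj_prob_snoc:
  assumes "length \<tau> = n" "0 < n"
  shows "traj_prob s0 (Suc n) P R pol (\<tau> @ [x])
    = traj_prob s0 n P R pol \<tau> * P (st_of (last \<tau>)) (ac_of (last \<tau>)) (st_of x) * act_rew_prob pol R x"
proof -
  let ?\<tau>' = "\<tau> @ [x]"
  obtain m where m: "n = Suc m" using assms(2) gr0_implies_Suc by blast
  have "\<tau> \<noteq> []"
    using assms by auto
  then have first: "?\<tau>' ! 0 = \<tau> ! 0" and before_last: "?\<tau>' ! m = last \<tau>" and new: "?\<tau>' ! n = x"
    using assms by (simp_all add: nth_append last_conv_nth m)
  have emissions: "(\<Prod>t<Suc n. act_rew_prob pol R (?\<tau>' ! t))
      = (\<Prod>t<n. act_rew_prob pol R (\<tau> ! t)) * act_rew_prob pol R x"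
    using assms(1) by (simp add: nth_append)
  have "(\<Prod>t<m. P (st_of (?\<tau>' ! t)) (ac_of (?\<tau>' ! t)) (st_of (?\<tau>' ! Suc t)))
      = (\<Prod>t<m. P (st_of (\<tau> ! t)) (ac_of (\<tau> ! t)) (st_of (\<tau> ! Suc t)))"
    using assms(1) m by (intro prod.cong) (auto simp: nth_append)
  then have transitions: "(\<Prod>t<n. P (st_of (?\<tau>' ! t)) (ac_of (?\<tau>' ! t)) (st_of (?\<tau>' ! Suc t)))
      = (\<Prod>t<m. P (st_of (\<tau> ! t)) (ac_of (\<tau> ! t)) (st_of (\<tau> ! Suc t)))
        * P (st_of (last \<tau>)) (ac_of (last \<tau>)) (st_of x)"
    using before_last new by (simp add: m)
  show ?thesis
    using assms first emissions transitions
    by (simp add: traj_prob_def act_rew_prob_def[symmetric] m)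
qed

context
  fixes lay :: "'s::finite \<Rightarrow> nat" and s0 :: 's and H :: nat
    and P :: "'s \<Rightarrow> 'a::finite \<Rightarrow> 's \<Rightarrow> real"
    and R :: "'s \<Rightarrow> 'a \<Rightarrow> 'r::finite \<Rightarrow> real"
    and pol :: "'s \<Rightarrow> 'a \<Rightarrow> real"
  assumes mdp: "finite_mdp lay s0 H P R"
    and policy: "is_policy pol"
begin

lemma H_pos: "0 < H"
  and lay_s0: "lay s0 = 0"
  and P_nonneg: "0 \<le> P s a s'"
  and P_sum: "Suc (lay s) < H \<Longrightarrow> (\<Sum>s'\<in>UNIV. P s a s') = 1"
  and P_next_layer: "Suc (lay s) < H \<Longrightarrow> P s a s' \<noteq> 0 \<Longrightarrow> lay s' = Suc (lay s)"
  and lay_less_H: "lay s < H"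
  and R_nonneg: "0 \<le> R s a r"
  and R_sum: "(\<Sum>r\<in>UNIV. R s a r) = 1"
  and pol_nonneg: "0 \<le> pol s a"
  and pol_sum: "(\<Sum>a\<in>UNIV. pol s a) = 1"
  using mdp policy unfolding finite_mdp_def is_policy_def by auto

lemma traj_prob_nonneg: "0 \<le> traj_prob s0 n P R pol \<tau>"
  by (auto simp: traj_prob_def intro!: mult_nonneg_nonneg prod_nonneg P_nonneg R_nonneg pol_nonneg)

lemma sum_next_step_prob:
  assumes "Suc (lay s) < H"
  shows "(\<Sum>y\<in>UNIV. P s a (st_of y) * act_rew_prob pol R y) = 1"
proof -
  have "(\<Sum>y\<in>UNIV. P s a (st_of y) * act_rew_prob pol R y)
      = (\<Sum>s'\<in>UNIV. P s a s' * (\<Sum>b\<in>UNIV. pol s' b * (\<Sum>r\<in>UNIV. R s' b r)))"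
    by (simp add: sum_UNIV_triples sum_distrib_left act_rew_prob_def st_of_def ac_of_def rw_of_def)
  then show ?thesis
    by (simp add: R_sum pol_sum P_sum[OF assms])
qed

lemma traj_prob_last_layer:
  assumes "length \<tau> = n" "0 < n" "n \<le> H" "traj_prob s0 n P R pol \<tau> \<noteq> 0"
  shows "lay (st_of (last \<tau>)) = n - 1"
  using \<open>0 < n\<close> assms(1,3,4)
proof (induction n arbitrary: \<tau> rule: nat_induct_non_zero)
  case 1
  then obtain x where "\<tau> = [x]"
    by (auto simp: length_Suc_conv)
  with 1 show ?case
    by (simp add: traj_prob_singleton lay_s0)
next
  case (Suc n)
  then obtain \<sigma> x where \<tau>: "\<tau> = \<sigma> @ [x]" and "length \<sigma> = n"
    by (auto simp: length_Suc_conv_rev)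
  with Suc.prems have "traj_prob s0 n P R pol \<sigma> \<noteq> 0"
    and step: "P (st_of (last \<sigma>)) (ac_of (last \<sigma>)) (st_of x) \<noteq> 0"
    by (auto simp: traj_prob_snoc[OF _ \<open>0 < n\<close>])
  with Suc have "lay (st_of (last \<sigma>)) = n - 1"
    using \<open>length \<sigma> = n\<close> by simp
  with step Suc.prems \<open>0 < n\<close> show ?case
    using P_next_layer[of "st_of (last \<sigma>)"] by (simp add: \<tau>)
qed

lemma sum_traj_prob_snoc:
  assumes "length \<tau> = n" "0 < n" "n < H"
  shows "(\<Sum>y\<in>UNIV. traj_prob s0 (Suc n) P R pol (\<tau> @ [y])) = traj_prob s0 n P R pol \<tau>"
proof (cases "traj_prob s0 n P R pol \<tau> = 0")
  case False
  then have "Suc (lay (st_of (last \<tau>))) < H"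
    using traj_prob_last_layer assms by fastforce
  then show ?thesis
    using sum_next_step_prob
    by (simp add: traj_prob_snoc assms mult.assoc flip: sum_distrib_left)
qed (simp add: traj_prob_snoc assms)

lemma sum_traj_prob_take:
  assumes "0 < m" "m \<le> n" "n \<le> H"
  shows "(\<Sum>\<tau> | length \<tau> = n. traj_prob s0 n P R pol \<tau> * g (take m \<tau>))
    = (\<Sum>\<tau> | length \<tau> = m. traj_prob s0 m P R pol \<tau> * g \<tau>)"
  using \<open>m \<le> n\<close> \<open>n \<le> H\<close>
proof (induction n rule: dec_induct)
  case base
  then show ?case
    by (intro sum.cong) auto
next
  case (step n)
  have "(\<Sum>\<tau> | length \<tau> = Suc n. traj_prob s0 (Suc n) P R pol \<tau> * g (take m \<tau>))
      = (\<Sum>\<tau> | length \<tau> = n. (\<Sum>y\<in>UNIV. traj_prob s0 (Suc n) P R pol (\<tau> @ [y])) * g (take m \<tau>))"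
    using step.hyps by (simp add: sum_lists_length_Suc sum_distrib_right)
  also have "\<dots> = (\<Sum>\<tau> | length \<tau> = n. traj_prob s0 n P R pol \<tau> * g (take m \<tau>))"
    using step assms(1) by (intro sum.cong) (simp_all add: sum_traj_prob_snoc)
  finally show ?case
    using step by simp
qed

lemma rho_layer_eq_0_off_layer: "t < H \<Longrightarrow> lay s \<noteq> t \<Longrightarrow> rho_layer lay s0 H P pol t s = 0"
proof (induction t arbitrary: s)
  case 0
  then show ?case
    using lay_s0 by auto
next
  case (Suc t)
  then have "P s' a s = 0" if "lay s' = t" for s' a
    using P_next_layer[of s' a s] that by auto
  then show ?case
    by simp
qed

lemma rho_layer_nonneg: "0 \<le> rho_layer lay s0 H P pol t s"
  by (induction t arbitrary: s) (auto intro!: sum_nonneg mult_nonneg_nonneg P_nonneg pol_nonneg)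

lemma rho_sar_nonneg: "0 \<le> rho_sar lay s0 H P R pol s a r"
  by (simp add: rho_sar_def rho_s_def rho_layer_nonneg pol_nonneg R_nonneg)

lemma sum_rho_layer_eq_rho_s: "(\<Sum>t<H. rho_layer lay s0 H P pol t s) = rho_s lay s0 H P pol s"
proof -
  have "(\<Sum>t<H. rho_layer lay s0 H P pol t s) = (\<Sum>t<H. if t = lay s then rho_layer lay s0 H P pol t s else 0)"
    by (intro sum.cong) (auto simp: rho_layer_eq_0_off_layer)
  then show ?thesis
    using lay_less_H[of s] by (simp add: rho_s_def)
qed

lemma rho_layer_Suc_eq_sum_triples:
  assumes "h < H"
  shows "(\<Sum>z\<in>UNIV. rho_layer lay s0 H P pol h (st_of z) * act_rew_prob pol R z * P (st_of z) (ac_of z) s)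
    = rho_layer lay s0 H P pol (Suc h) s"
proof -
  have "(\<Sum>z\<in>UNIV. rho_layer lay s0 H P pol h (st_of z) * act_rew_prob pol R z * P (st_of z) (ac_of z) s)
      = (\<Sum>s'\<in>UNIV. \<Sum>a\<in>UNIV. rho_layer lay s0 H P pol h s' * pol s' a * P s' a s * (\<Sum>r\<in>UNIV. R s' a r))"
    by (simp add: sum_UNIV_triples sum_distrib_left sum_distrib_right act_rew_prob_def st_of_def ac_of_def rw_of_def mult_ac)
  also have "\<dots> = (\<Sum>s'\<in>UNIV. \<Sum>a\<in>UNIV. rho_layer lay s0 H P pol h s' * pol s' a * P s' a s)"
    by (simp add: R_sum)
  also have "\<dots> = (\<Sum>s'\<in>{x. lay x = h}. \<Sum>a\<in>UNIV. rho_layer lay s0 H P pol h s' * pol s' a * P s' a s)"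
    using assms by (intro sum.mono_neutral_right) (auto simp: rho_layer_eq_0_off_layer)
  finally show ?thesis
    by simp
qed

lemma traj_prob_last_marginal:
  assumes "0 < n" "n \<le> H"
  shows "(\<Sum>\<tau> | length \<tau> = n. traj_prob s0 n P R pol \<tau> * of_bool (last \<tau> = x))
    = real H * rho_layer lay s0 H P pol (n - 1) (st_of x) * act_rew_prob pol R x"
  using assms
proof (induction n arbitrary: x rule: nat_induct_non_zero)
  case 1
  have "(\<Sum>\<tau> | length \<tau> = 1. traj_prob s0 1 P R pol \<tau> * of_bool (last \<tau> = x)) = traj_prob s0 1 P R pol [x]"
    using sum_lists_length_Suc[of "\<lambda>\<tau>. traj_prob s0 1 P R pol \<tau> * of_bool (last \<tau> = x)" 0]
    by (simp add: of_bool_def if_distrib cong: if_cong)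
  then show ?case
    using H_pos by (simp add: traj_prob_singleton)
next
  case (Suc n)
  let ?next = "\<lambda>z. P (st_of z) (ac_of z) (st_of x) * act_rew_prob pol R x"
  have "(\<Sum>\<tau> | length \<tau> = Suc n. traj_prob s0 (Suc n) P R pol \<tau> * of_bool (last \<tau> = x))
      = (\<Sum>\<tau> | length \<tau> = n. traj_prob s0 (Suc n) P R pol (\<tau> @ [x]))"
    by (simp add: sum_lists_length_Suc of_bool_def if_distrib cong: if_cong)
  also have "\<dots> = (\<Sum>\<tau> | length \<tau> = n. traj_prob s0 n P R pol \<tau> * ?next (last \<tau>))"
    using Suc.hyps by (intro sum.cong) (simp_all add: traj_prob_snoc mult.assoc)
  also have "\<dots> = (\<Sum>z\<in>UNIV.
      (\<Sum>\<tau> | length \<tau> = n. traj_prob s0 n P R pol \<tau> * of_bool (last \<tau> = z)) * ?next z)"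
    by (rule sum_regroup_by_value)
  also have "\<dots> = real H * act_rew_prob pol R x
      * (\<Sum>z\<in>UNIV. rho_layer lay s0 H P pol (n - 1) (st_of z) * act_rew_prob pol R z * P (st_of z) (ac_of z) (st_of x))"
    using Suc by (simp add: sum_distrib_left mult_ac)
  also have "\<dots> = real H * rho_layer lay s0 H P pol n (st_of x) * act_rew_prob pol R x"
    using Suc rho_layer_Suc_eq_sum_triples[of "n - 1" "st_of x"] by simp
  finally show ?case
    by simp
qed

lemma traj_prob_marginal:
  assumes "t < n" "n \<le> H"
  shows "(\<Sum>\<tau> | length \<tau> = n. traj_prob s0 n P R pol \<tau> * of_bool (\<tau> ! t = x))
    = real H * rho_layer lay s0 H P pol t (st_of x) * act_rew_prob pol R x"
proof -
  have "(\<Sum>\<tau> | length \<tau> = n. traj_prob s0 n P R pol \<tau> * of_bool (\<tau> ! t = x))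
      = (\<Sum>\<tau> | length \<tau> = n. traj_prob s0 n P R pol \<tau> * of_bool (last (take (Suc t) \<tau>) = x))"
    using assms(1) by (intro sum.cong) (simp_all add: take_Suc_conv_app_nth)
  also have "\<dots> = (\<Sum>\<tau> | length \<tau> = Suc t. traj_prob s0 (Suc t) P R pol \<tau> * of_bool (last \<tau> = x))"
    using assms by (intro sum_traj_prob_take) simp_all
  finally show ?thesis
    using assms traj_prob_last_marginal[of "Suc t" x] by simp
qed

lemma expected_visit_count:
  "(\<Sum>\<tau> | length \<tau> = H. traj_prob s0 H P R pol \<tau> * (\<Sum>t<H. of_bool (\<tau> ! t \<in> A)))
    = real H * (\<Sum>(s, a, r)\<in>A. rho_sar lay s0 H P R pol s a r)"
proof -
  let ?T = "{\<tau>. length \<tau> = H}"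
  have "of_bool (\<tau> ! t \<in> A) = (\<Sum>x\<in>A. of_bool (\<tau> ! t = x) :: real)" for \<tau> t
    by (simp add: of_bool_def)
  then have "(\<Sum>\<tau>\<in>?T. traj_prob s0 H P R pol \<tau> * (\<Sum>t<H. of_bool (\<tau> ! t \<in> A)))
      = (\<Sum>\<tau>\<in>?T. \<Sum>t<H. \<Sum>x\<in>A. traj_prob s0 H P R pol \<tau> * of_bool (\<tau> ! t = x))"
    by (simp only: sum_distrib_left)
  also have "\<dots> = (\<Sum>t<H. \<Sum>\<tau>\<in>?T. \<Sum>x\<in>A. traj_prob s0 H P R pol \<tau> * of_bool (\<tau> ! t = x))"
    by (rule sum.swap)
  also have "\<dots> = (\<Sum>t<H. \<Sum>x\<in>A. \<Sum>\<tau>\<in>?T. traj_prob s0 H P R pol \<tau> * of_bool (\<tau> ! t = x))"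
    by (intro sum.cong refl) (rule sum.swap)
  also have "\<dots> = (\<Sum>t<H. \<Sum>x\<in>A. real H * rho_layer lay s0 H P pol t (st_of x) * act_rew_prob pol R x)"
    by (simp add: traj_prob_marginal)
  also have "\<dots> = real H * (\<Sum>x\<in>A. rho_s lay s0 H P pol (st_of x) * act_rew_prob pol R x)"
    by (simp add: sum.swap[of _ "{..<H}"] sum_distrib_left sum_distrib_right mult.assoc
        flip: sum_rho_layer_eq_rho_s)
  finally show ?thesis
    by (simp add: rho_sar_def act_rew_prob_def case_prod_unfold st_of_def ac_of_def rw_of_def mult.assoc)
qed

lemma p_out_le_unseen_visitation:
  "p_out s0 H P R pol D \<le> real H * (\<Sum>(s, a, r)\<in>- D_triples D. rho_sar lay s0 H P R pol s a r)"
proof -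
  let ?unseen = "\<lambda>x. st_of x \<notin> D_states D \<or> x \<notin> D_triples D"
  have "p_out s0 H P R pol D
      = (\<Sum>\<tau> | length \<tau> = H. traj_prob s0 H P R pol \<tau> * of_bool (\<exists>t<H. ?unseen (\<tau> ! t)))"
    by (simp add: p_out_def of_bool_def)
  also have "\<dots> \<le> (\<Sum>\<tau> | length \<tau> = H.
      traj_prob s0 H P R pol \<tau> * (\<Sum>t<H. of_bool (\<tau> ! t \<in> - D_triples D)))"
  proof (intro sum_mono mult_left_mono traj_prob_nonneg)
    fix \<tau> :: "('s \<times> 'a \<times> 'r) list"
    have "?unseen x \<longleftrightarrow> x \<in> - D_triples D" for x
      by (auto simp: D_states_def)
    then show "of_bool (\<exists>t<H. ?unseen (\<tau> ! t)) \<le> (\<Sum>t<H. of_bool (\<tau> ! t \<in> - D_triples D) :: real)"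
      using of_bool_ex_le_count[of H "\<lambda>t. \<tau> ! t \<in> - D_triples D"] by simp
  qed
  also have "\<dots> = real H * (\<Sum>(s, a, r)\<in>- D_triples D. rho_sar lay s0 H P R pol s a r)"
    by (rule expected_visit_count)
  finally show ?thesis .
qed

end

theorem lemma4:
  fixes lay :: "'s::finite \<Rightarrow> nat" and s0 :: 's and H :: nat
    and P :: "'s \<Rightarrow> 'a::finite \<Rightarrow> 's \<Rightarrow> real"
    and R :: "'s \<Rightarrow> 'a \<Rightarrow> 'r::finite \<Rightarrow> real"
    and pol :: "'s \<Rightarrow> 'a \<Rightarrow> real"
    and D :: "('s \<times> 'a \<times> 'r) list list"
  assumes "finite_mdp lay s0 H P R"
    and "is_policy pol"
  shows "p_out s0 H P R pol D \<le> real H *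
    ((\<Sum>s\<in>UNIV. \<bar>rho_s lay s0 H P pol s - rho_s lay s0 H (P_D D) pol s\<bar>)
     + (\<Sum>(s, a, r)\<in>UNIV. \<bar>rho_sar lay s0 H P R pol s a r - rho_sar lay s0 H (P_D D) (R_D D) pol s a r\<bar>))"
proof -
  let ?dist = "\<lambda>(s, a, r). \<bar>rho_sar lay s0 H P R pol s a r - rho_sar lay s0 H (P_D D) (R_D D) pol s a r\<bar>"
  have "(\<Sum>(s, a, r)\<in>- D_triples D. rho_sar lay s0 H P R pol s a r) = (\<Sum>x\<in>- D_triples D. ?dist x)"
    using rho_sar_nonneg[OF assms] by (intro sum.cong) (auto simp: rho_sar_dataset_eq_0_if_unseen)
  also have "\<dots> \<le> (\<Sum>x\<in>UNIV. ?dist x)"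
    by (intro sum_mono2) auto
  also have "\<dots> \<le> (\<Sum>s\<in>UNIV. \<bar>rho_s lay s0 H P pol s - rho_s lay s0 H (P_D D) pol s\<bar>)
      + (\<Sum>x\<in>UNIV. ?dist x)"
    by (simp add: sum_nonneg)
  finally show ?thesis
    using p_out_le_unseen_visitation[OF assms, of D] by (meson mult_left_mono of_nat_0_le_iff order_trans)
qed

end
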